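(* Consider the model described in the context, with fixed $N_\text{c}$, $s$, and a weighting factor $\alpha \ge 0$. Then the system cost $z(r) = \mathbb{E}\{P\}(r) + \alpha\, \mathbb{E}\{n\}(r)$, regarded as a function of the data rate $r \in (\lambda L, \infty)$, has a unique stationary point $r^*$ (which is its minimizer), and $r^*$ is characterized by \[ \Omega\!\left( \frac{\alpha g \eta}{\mathrm{e}} \left(\frac{r^*}{r^* - \lambda L}\right)^2 + \frac{g \eta P_\text{s} - 1}{\mathrm{e}} \right) = \frac{r^* \ln 2}{W} - 1 , \] where $\Omega(\cdot)$ is the principal branch of the Lambert W function, $P_\text{s} = P_\text{o} - P_\text{sleep} - 2\lambda E_\text{sw}$ and $P_\text{o} = N_\text{c} P_\text{Bm} + \Delta_{P_\text{B}} c_0 s^{\beta-1} + P_\text{RF}$.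
   Context: A virtual base station (VBS) is modeled as an M/G/1 processor-sharing queue: flows arrive at rate $\lambda>0$, each with mean size $L>0$, and are served at total rate $r$ (bits/s) whenever the queue is nonempty; $r > \lambda L$, and the load is $\rho = \lambda L / r$. The mean queue length is $\mathbb{E}\{n\} = \rho/(1-\rho) = \lambda L/(r-\lambda L)$ and the mean delay is $\mathbb{E}\{D\} = \mathbb{E}\{n\}/\lambda$. The transmit power $P_\text{out}$ needed for rate $r$ is given by $r = W\log_2(1 + g P_\text{out})$, i.e. $P_\text{out} = (2^{r/W}-1)/g$, where $W>0$ is the bandwidth and $g>0$ the channel gain. When busy the VBS consumes $P_\text{B} + P_\text{R}$ with RRH power $P_\text{R} = P_\text{out}/\eta + P_\text{RF}$ ($\eta\in(0,1]$ the power amplifier efficiency, $P_\text{RF}\ge 0$) and BBU power $P_\text{B} = N_\text{c} P_\text{Bm} + \Delta_{P_\text{B}} c_0 s^{\beta-1} + \Delta_{P_\text{B}}\kappa r s^{\beta-1}$, where $N_\text{c}$ is the number of active CPU cores, $s>0$ the CPU speed, $P_\text{Bm}$ the minimum per-core power, $\Delta_{P_\text{B}} = (P_\text{BM}-P_\text{Bm})/s_0^\beta \ge 0$, and $c_0,\kappa,\beta$ are nonnegative constants. When the queue is empty the VBS sleeps with power $P_\text{sleep}$, and each on/off switch costs energy $E_\text{sw}\ge 0$. With $\mathbb{E}\{T_\text{c}\} = 1/(\lambda(1-\rho))$ the mean length of a busy-plus-idle cycle, the average power is $\mathbb{E}\{P\} = \rho (P_\text{B} + P_\text{R}) + (1-\rho)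 P_\text{sleep} + 2E_\text{sw}/\mathbb{E}\{T_\text{c}\}$.
   Formalization: The case alpha = 0 is covered only when $\mathrm{e}^{\lambda L \ln 2/W}(\lambda L \ln 2/W - 1) + 1 < g \eta P_\text{s}$; for alpha > 0 no further hypothesis is imposed. Apart from conventions, each condition added here is assumed in the paper as well or is needed for the statement above to hold. *)

theory Defs
  imports Complex_Main
begin

text \<open>Principal branch of the Lambert W function: for x \<ge> -1/e, the unique
  w \<ge> -1 with w * exp w = x.\<close>
definition lambertW :: "real \<Rightarrow> real" where
  "lambertW x = (THE w. w \<ge> -1 \<and> w * exp w = x)"

definition Delta_PB :: "real \<Rightarrow> real \<Rightarrow> real \<Rightarrow> real \<Rightarrow> real" where
  "Delta_PB PBM PBm s0 beta = (PBM - PBm) / s0 powr beta"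

definition P_B :: "nat \<Rightarrow> real \<Rightarrow> real \<Rightarrow> real \<Rightarrow> real \<Rightarrow> real \<Rightarrow> real \<Rightarrow> real \<Rightarrow> real" where
  "P_B Nc PBm Delta c0 kappa beta s r =
     real Nc * PBm + Delta * c0 * s powr (beta - 1) + Delta * kappa * r * s powr (beta - 1)"

text \<open>Transmit power needed for rate r: r = W log2(1 + g Pout).\<close>
definition P_out :: "real \<Rightarrow> real \<Rightarrow> real \<Rightarrow> real" where
  "P_out W g r = (2 powr (r / W) - 1) / g"

definition P_R :: "real \<Rightarrow> real \<Rightarrow> real \<Rightarrow> real \<Rightarrow> real \<Rightarrow> real" where
  "P_R eta PRF W g r = P_out W g r / eta + PRF"

definition load :: "real \<Rightarrow> real \<Rightarrow> real \<Rightarrow> real" where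
  "load lam L r = lam * L / r"

text \<open>Mean queue length E{n} of the M/G/1-PS queue.\<close>
definition mean_queue :: "real \<Rightarrow> real \<Rightarrow> real \<Rightarrow> real" where
  "mean_queue lam L r = lam * L / (r - lam * L)"

text \<open>Mean busy-plus-idle cycle length E{T_c}.\<close>
definition mean_cycle :: "real \<Rightarrow> real \<Rightarrow> real \<Rightarrow> real" where
  "mean_cycle lam L r = 1 / (lam * (1 - load lam L r))"

definition avg_power :: "real \<Rightarrow> real \<Rightarrow> real \<Rightarrow> real \<Rightarrow> real \<Rightarrow> real \<Rightarrow> real \<Rightarrow> real" where
  "avg_power PB PR Psleep Esw lam L r =
     load lam L r * (PB + PR) + (1 - load lam L r) * Psleep + 2 * Esw / mean_cycle lam L r"

definition sys_cost ::
  "real \<Rightarrow> real \<Rightarrow> real \<Rightarrow> real \<Rightarrow> real \<Rightarrow> real \<Rightarrow> nat \<Rightarrow> real \<Rightarrow> real \<Rightarrow> real \<Rightarrow> real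
   \<Rightarrow> real \<Rightarrow> real \<Rightarrow> real \<Rightarrow> real \<Rightarrow> real \<Rightarrow> real \<Rightarrow> real" where
  "sys_cost lam L W g eta PRF Nc PBm Delta c0 kappa beta s Psleep Esw alpha r =
     avg_power (P_B Nc PBm Delta c0 kappa beta s r) (P_R eta PRF W g r) Psleep Esw lam L r
     + alpha * mean_queue lam L r"

end

theory Submission
  imports Defs "HOL-Real_Asymp.Real_Asymp"
begin

text \<open>For \<open>r > 0\<close> the cost is \<open>z(r) = a (Q + e\<^sup>c\<^sup>r) / (g \<eta> r) + const + \<alpha> a / (r - a)\<close> with
  \<open>a = \<lambda>L\<close>, \<open>c = ln 2 / W\<close> and \<open>Q = g \<eta> P\<^sub>s - 1\<close>, so \<open>z'(r) = a / (g \<eta> r\<^sup>2) \<cdot> h(r)\<close> where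
  \<open>h(r) = e\<^sup>c\<^sup>r (c r - 1) - Q - \<alpha> g \<eta> (r / (r - a))\<^sup>2\<close>. On \<open>(a, \<infinity>)\<close> the first term of \<open>h\<close> is
  strictly increasing and the last one nondecreasing; \<open>h < 0\<close> near \<open>a\<^sup>+\<close> (\<open>h \<rightarrow> -\<infinity>\<close> if \<open>\<alpha> > 0\<close>,
  the nondegeneracy hypothesis if \<open>\<alpha> = 0\<close>) and \<open>h \<rightarrow> \<infinity>\<close> at \<open>\<infinity>\<close>. Hence \<open>h\<close>
  has exactly one root \<open>r\<^sup>*\<close>, where \<open>z'\<close> changes sign from negative to positive.
  Substituting \<open>u = c r\<^sup>* - 1\<close> turns \<open>h(r\<^sup>*) = 0\<close> into \<open>u e\<^sup>u = (Q + \<alpha> g \<eta> (r\<^sup>*/(r\<^sup>*-a))\<^sup>2) / e\<close>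
  with \<open>u > -1\<close>, i.e. \<open>u = \<Omega>(\<dots>)\<close>.\<close>

lemma mult_exp_strict_mono:
  fixes p q :: real
  assumes "-1 \<le> p" "p < q"
  shows "p * exp p < q * exp q"
proof (rule DERIV_pos_imp_increasing_open[OF assms(2)])
  fix x assume "p < x" "x < q"
  then have "0 < exp x * (1 + x)" using assms by (intro mult_pos_pos) auto
  then show "\<exists>y. DERIV (\<lambda>w. w * exp w) x :> y \<and> y > 0"
    by (intro exI[of _ "exp x + x * exp x"]) (auto intro!: derivative_eq_intros simp: algebra_simps)
qed (intro continuous_intros)

lemma lambertW_eqI:
  assumes "w \<ge> -1" "w * exp w = x"
  shows "lambertW x = w"
  unfolding lambertW_def
proof (rule the_equality)
  fix v assume v: "v \<ge> -1 \<and> v * exp v = x"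
  show "v = w"
  proof (rule ccontr)
    assume "v \<noteq> w"
    then consider "v < w" | "w < v" by linarith
    then show False
      using mult_exp_strict_mono[of v w] mult_exp_strict_mono[of w v] v assms by auto
  qed
qed (use assms in simp)

lemma stationary_point_unique_min:
  fixes f f' :: "real \<Rightarrow> real"
  assumes deriv: "\<And>x. a < x \<Longrightarrow> (f has_real_derivative f' x) (at x)"
    and sign: "\<And>x. a < x \<Longrightarrow> sgn (f' x) = sgn (x - x0)"
    and "a < x0"
  shows "(f has_real_derivative 0) (at x0)"
    and "\<And>x. a < x \<Longrightarrow> (f has_real_derivative 0) (at x) \<Longrightarrow> x = x0"
    and "\<And>x. a < x \<Longrightarrow> f x0 \<le> f x"
proof -
  show "(f has_real_derivative 0) (at x0)"
    using deriv[OF \<open>a < x0\<close>] sign[OF \<open>a < x0\<close>] by (simp add: sgn_0_0)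
next
  fix x assume "a < x" "(f has_real_derivative 0) (at x)"
  then have "f' x = 0" using DERIV_unique deriv by blast
  then show "x = x0" using sign[OF \<open>a < x\<close>] by (simp add: sgn_0_0)
next
  fix x assume "a < x"
  show "f x0 \<le> f x"
  proof (cases "x \<le> x0")
    case True
    show ?thesis
    proof (rule DERIV_nonpos_imp_nonincreasing[OF True])
      fix y assume "x \<le> y" "y \<le> x0"
      then have "a < y" "f' y \<le> 0"
        using \<open>a < x\<close> sign[of y] by (auto simp: sgn_if split: if_splits)
      then show "\<exists>d. (f has_real_derivative d) (at y) \<and> d \<le> 0" using deriv by blast
    qed
  next
    case False
    show ?thesis
    proof (rule DERIV_nonneg_imp_nondecreasing[of x0 x f])
      show "x0 \<le> x" using False by simp
    next
      fix y assume "x0 \<le> y" "y \<le> x"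
      then have "a < y" "f' y \<ge> 0"
        using \<open>a < x0\<close> sign[of y] by (auto simp: sgn_if split: if_splits)
      then show "\<exists>d. (f has_real_derivative d) (at y) \<and> d \<ge> 0" using deriv by blast
    qed
  qed
qed

definition stationarity_fn :: "real \<Rightarrow> real \<Rightarrow> real \<Rightarrow> real \<Rightarrow> real \<Rightarrow> real" where
  "stationarity_fn a c Q k r = exp (c * r) * (c * r - 1) - Q - k * (r / (r - a))^2"

lemma stationarity_fn_strict_mono:
  assumes "0 < a" "0 < c" "0 \<le> k" "a < x" "x < y"
  shows "stationarity_fn a c Q k x < stationarity_fn a c Q k y"
proof -
  have "(c * x - 1) * exp (c * x - 1) < (c * y - 1) * exp (c * y - 1)"
    using assms by (intro mult_exp_strict_mono) auto
  then have "exp (c * x) * (c * x - 1) / exp 1 < exp (c * y) * (c * y - 1) / exp 1"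
    by (simp add: exp_diff mult.commute)
  then have exp_part: "exp (c * x) * (c * x - 1) < exp (c * y) * (c * y - 1)"
    by (simp add: divide_less_cancel)
  have "y / (y - a) < x / (x - a)"
    using assms by (simp add: divide_simps) (simp add: algebra_simps)
  moreover have "0 \<le> y / (y - a)" using assms by simp
  ultimately have "(y / (y - a))^2 \<le> (x / (x - a))^2" by (intro power_mono) auto
  then have "k * (y / (y - a))^2 \<le> k * (x / (x - a))^2" using assms by (intro mult_left_mono)
  with exp_part show ?thesis unfolding stationarity_fn_def by linarith
qed

lemma stationarity_fn_eventually_neg:
  assumes "0 < a" "0 \<le> k" "0 < k \<or> exp (c * a) * (c * a - 1) < Q"
  shows "eventually (\<lambda>r. stationarity_fn a c Q k r < 0) (at_right a)"
proof (cases "0 < k")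
  case True
  then have "filterlim (stationarity_fn a c Q k) at_bot (at_right a)"
    unfolding stationarity_fn_def using \<open>0 < a\<close> by real_asymp
  then show ?thesis by (simp add: filterlim_at_bot_dense)
next
  case False
  then have "k = 0" "exp (c * a) * (c * a - 1) - Q < 0" using assms by auto
  moreover have "((\<lambda>r. exp (c * r) * (c * r - 1) - Q) \<longlongrightarrow> exp (c * a) * (c * a - 1) - Q) (at_right a)"
    by (intro tendsto_intros)
  ultimately have "eventually (\<lambda>r. exp (c * r) * (c * r - 1) - Q < 0) (at_right a)"
    using order_tendstoD(2) by blast
  with \<open>k = 0\<close> show ?thesis unfolding stationarity_fn_def by simp
qed

lemma stationarity_fn_root:
  assumes "0 < a" "0 < c" "0 \<le> k" and nondeg: "0 < k \<or> exp (c * a) * (c * a - 1) < Q"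
  obtains rs where "a < rs"
    and "\<And>r. a < r \<Longrightarrow> sgn (stationarity_fn a c Q k r) = sgn (r - rs)"
proof -
  let ?h = "stationarity_fn a c Q k"
  have "eventually (\<lambda>r. a < r \<and> ?h r < 0) (at_right a)"
    using stationarity_fn_eventually_neg[OF \<open>0 < a\<close> \<open>0 \<le> k\<close> nondeg]
    by (simp add: eventually_conj_iff eventually_at_right_less)
  then obtain r1 where "a < r1" "?h r1 < 0" using eventually_happens by fastforce
  have "filterlim ?h at_top at_top"
    unfolding stationarity_fn_def using \<open>0 < c\<close> by real_asymp
  then have "eventually (\<lambda>r. r1 < r \<and> 0 < ?h r) at_top"
    by (simp add: eventually_conj_iff eventually_gt_at_top filterlim_at_top_dense)
  then obtain r2 where "r1 < r2" "0 < ?h r2" using eventually_happens by fastforce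
  have "continuous_on {r1..r2} ?h"
    unfolding stationarity_fn_def using \<open>a < r1\<close> by (intro continuous_intros) auto
  then obtain rs where "r1 \<le> rs" "?h rs = 0"
    using IVT'[of ?h r1 0 r2] \<open>?h r1 < 0\<close> \<open>0 < ?h r2\<close> \<open>r1 < r2\<close> by auto
  show thesis
  proof
    show "a < rs" using \<open>a < r1\<close> \<open>r1 \<le> rs\<close> by simp
    fix r assume "a < r"
    then consider "r < rs" | "r = rs" | "rs < r" by linarith
    then show "sgn (?h r) = sgn (r - rs)"
      using stationarity_fn_strict_mono[OF assms(1-3), of r rs Q]
        stationarity_fn_strict_mono[OF assms(1-3), of rs r Q] \<open>a < r\<close> \<open>a < rs\<close> \<open>?h rs = 0\<close>
      by cases (auto simp: sgn_if)
  qed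
qed

lemma lambertW_stationarity_root:
  assumes "stationarity_fn a c Q k r = 0" "0 \<le> c * r"
  shows "lambertW (k / exp 1 * (r / (r - a))^2 + Q / exp 1) = c * r - 1"
proof (rule lambertW_eqI)
  show "-1 \<le> c * r - 1" using assms(2) by simp
  have "exp (c * r) * (c * r - 1) = Q + k * (r / (r - a))^2"
    using assms(1) unfolding stationarity_fn_def by simp
  then show "(c * r - 1) * exp (c * r - 1) = k / exp 1 * (r / (r - a))^2 + Q / exp 1"
    by (simp add: exp_diff field_simps)
qed

lemma sys_cost_closed_form:
  fixes lam L W g eta PRF PBm Delta c0 kappa beta s Psleep Esw alpha r :: real and Nc :: nat
  defines "Ps \<equiv> (real Nc * PBm + Delta * c0 * s powr (beta - 1) + PRF) - Psleep - 2 * lam * Esw"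
  assumes "g \<noteq> 0" "eta \<noteq> 0" "r \<noteq> 0"
  shows "sys_cost lam L W g eta PRF Nc PBm Delta c0 kappa beta s Psleep Esw alpha r
    = lam * L * (g * eta * Ps - 1 + exp (ln 2 / W * r)) / (g * eta * r)
      + (lam * L * Delta * kappa * s powr (beta - 1) + Psleep + 2 * lam * Esw)
      + alpha * lam * L / (r - lam * L)"
proof -
  have "2 powr (r / W) = exp (ln 2 / W * r)" by (simp add: powr_def)
  with assms show ?thesis
    unfolding sys_cost_def avg_power_def P_B_def P_R_def P_out_def load_def mean_cycle_def
      mean_queue_def
    by (simp add: field_simps)
qed

lemma has_real_derivative_sys_cost:
  fixes lam L W g eta PRF PBm Delta c0 kappa beta s Psleep Esw alpha r :: real and Nc :: nat
  defines "Ps \<equiv> (real Nc * PBm + Delta * c0 * s powr (beta - 1) + PRF) - Psleep - 2 * lam * Esw"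
  assumes "g \<noteq> 0" "eta \<noteq> 0" "0 \<le> lam * L" "lam * L < r"
  shows "(sys_cost lam L W g eta PRF Nc PBm Delta c0 kappa beta s Psleep Esw alpha
      has_real_derivative lam * L / (g * eta * r^2)
        * stationarity_fn (lam * L) (ln 2 / W) (g * eta * Ps - 1) (alpha * g * eta) r) (at r)"
proof -
  define a c Q C where "a = lam * L" and "c = ln 2 / W" and "Q = g * eta * Ps - 1"
    and "C = lam * L * Delta * kappa * s powr (beta - 1) + Psleep + 2 * lam * Esw"
  have "0 < r" "r - a \<noteq> 0" using assms unfolding a_def by auto
  have "((\<lambda>x. a * (Q + exp (c * x)) / (g * eta * x) + C + alpha * a / (x - a))
      has_real_derivative a / (g * eta * r^2) * stationarity_fn a c Q (alpha * g * eta) r) (at r)"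
    using \<open>0 < r\<close> \<open>r - a \<noteq> 0\<close> assms(2,3)
    by (auto intro!: derivative_eq_intros simp: stationarity_fn_def field_simps power2_eq_square)
  moreover have "eventually (\<lambda>x. sys_cost lam L W g eta PRF Nc PBm Delta c0 kappa beta s Psleep Esw alpha x
      = a * (Q + exp (c * x)) / (g * eta * x) + C + alpha * a / (x - a)) (nhds r)"
    using eventually_nhds_in_open[of "{0<..}" r] \<open>0 < r\<close>
    by (auto elim!: eventually_mono
        simp: sys_cost_closed_form assms a_def c_def Q_def C_def Ps_def add.commute)
  ultimately show ?thesis
    unfolding a_def c_def Q_def by (simp add: DERIV_cong_ev)
qed

theorem mainTheorem1:
  fixes lam L W g eta PRF PBm PBM s0 s c0 kappa beta Psleep Esw alpha :: real
    and Nc :: nat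
  assumes "lam > 0" and "L > 0" and "W > 0" and "g > 0"
    and "0 < eta" and "eta \<le> 1" and "PRF \<ge> 0"
    and "s > 0" and "s0 > 0" and "Delta_PB PBM PBm s0 beta \<ge> 0"
    and "c0 \<ge> 0" and "kappa \<ge> 0" and "beta \<ge> 0"
    and "Esw \<ge> 0" and "alpha \<ge> 0"
    and nondeg: "alpha > 0 \<or>
       exp (lam * L * ln 2 / W) * (lam * L * ln 2 / W - 1) + 1
         < g * eta * ((real Nc * PBm + Delta_PB PBM PBm s0 beta * c0 * s powr (beta - 1) + PRF)
                      - Psleep - 2 * lam * Esw)"
  shows "let Delta = Delta_PB PBM PBm s0 beta;
             Po = real Nc * PBm + Delta * c0 * s powr (beta - 1) + PRF;
             Ps = Po - Psleep - 2 * lam * Esw;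
             z = sys_cost lam L W g eta PRF Nc PBm Delta c0 kappa beta s Psleep Esw alpha
         in \<exists>rs. lam * L < rs
               \<and> (z has_real_derivative 0) (at rs)
               \<and> (\<forall>r. lam * L < r \<and> (z has_real_derivative 0) (at r) \<longrightarrow> r = rs)
               \<and> (\<forall>r. lam * L < r \<longrightarrow> z rs \<le> z r)
               \<and> lambertW (alpha * g * eta / exp 1 * (rs / (rs - lam * L))^2
                            + (g * eta * Ps - 1) / exp 1)
                   = rs * ln 2 / W - 1"
proof -
  define Delta where "Delta = Delta_PB PBM PBm s0 beta"
  define Ps where "Ps = (real Nc * PBm + Delta * c0 * s powr (beta - 1) + PRF) - Psleep - 2 * lam * Esw"
  define z where "z = sys_cost lam L W g eta PRF Nc PBm Delta c0 kappa beta s Psleep Esw alpha"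
  define h where "h = stationarity_fn (lam * L) (ln 2 / W) (g * eta * Ps - 1) (alpha * g * eta)"
  have "0 < lam * L" "0 < ln 2 / W" "0 \<le> alpha * g * eta" using assms by auto
  moreover have "0 < alpha * g * eta
      \<or> exp (ln 2 / W * (lam * L)) * (ln 2 / W * (lam * L) - 1) < g * eta * Ps - 1"
    using nondeg assms by (auto simp: Ps_def Delta_def mult.commute)
  ultimately obtain rs where rs: "lam * L < rs"
    and sgn_h: "\<And>r. lam * L < r \<Longrightarrow> sgn (h r) = sgn (r - rs)"
    unfolding h_def by (rule stationarity_fn_root) blast
  have deriv: "(z has_real_derivative lam * L / (g * eta * r^2) * h r) (at r)" if "lam * L < r" for r
    using has_real_derivative_sys_cost[of g eta lam L r] that assms unfolding z_def h_def Ps_def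
    by auto
  have "sgn (lam * L / (g * eta * r^2) * h r) = sgn (r - rs)" if "lam * L < r" for r
  proof -
    have "0 < lam * L / (g * eta * r^2)"
      using that \<open>0 < lam * L\<close> assms(4,5) by (intro divide_pos_pos[OF \<open>0 < lam * L\<close>]) auto
    then show ?thesis using sgn_h[OF that] by (simp only: sgn_mult sgn_pos)
  qed
  note z_min = stationary_point_unique_min[OF deriv this rs]
  have root: "h rs = 0" using sgn_h[OF rs] by (simp add: sgn_0_0)
  have "0 < rs" using rs \<open>0 < lam * L\<close> by linarith
  with \<open>0 < ln 2 / W\<close> have "0 \<le> ln 2 / W * rs" by (simp only: zero_le_mult_iff) simp
  with root have "lambertW (alpha * g * eta / exp 1 * (rs / (rs - lam * L))^2 + (g * eta * Ps - 1) / exp 1)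
      = ln 2 / W * rs - 1"
    unfolding h_def by (rule lambertW_stationarity_root)
  also have "\<dots> = rs * ln 2 / W - 1" by simp
  finally show ?thesis using rs z_min
    unfolding Let_def Delta_def[symmetric] Ps_def[symmetric] z_def[symmetric] by blast
qed

end
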